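(* For every integer $n\ge 0$, $$\sum_{k=0}^n(-1)^k\binom nk C_k\binom{2n-2k}{n-k}=\binom{n}{\lfloor n/2\rfloor}^2 .$$
   Context: $C_k=\binom{2k}{k}\frac{1}{k+1}$ denotes the $k$-th Catalan number. *)

theory Defs
  imports Main
begin

text \<open>k-th Catalan number C_k = binom(2k,k)/(k+1) (an integer; nat division is exact).\<close>
definition catalan :: "nat \<Rightarrow> nat" where
  "catalan k = ((2*k) choose k) div (k+1)"

end

theory Submission
  imports Defs Complex_Main
begin

text \<open>Since \<open>C\<^sub>k = binom(2k,k) - binom(2k,k+1)\<close>, the sum splits as \<open>A(n) - B(n)\<close>, where
  \<open>A\<close> and \<open>B\<close> are the analogous sums with \<open>C\<^sub>k\<close> replaced by \<open>binom(2k,k)\<close> and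
  \<open>binom(2k,k+1)\<close>. Zeilberger's creative telescoping gives both sums a recurrence of step two,
  \<open>(n+2)\<^sup>2 A(n+2) = 16 (n+1)\<^sup>2 A(n)\<close> and \<open>(n+3)\<^sup>2 B(n+2) = 16 (n+2)\<^sup>2 B(n)\<close>.
  Together with \<open>A(0) = 1, A(1) = 0, B(0) = 0, B(1) = -1\<close> they give \<open>A(2m) = binom(2m,m)\<^sup>2\<close>,
  \<open>A(2m+1) = 0\<close>, \<open>B(2m) = 0\<close> and \<open>B(2m+1) = -binom(2m+1,m)\<^sup>2\<close>.\<close>

lemma Suc_times_binomial_Suc: "Suc k * (n choose Suc k) = (n - k) * (n choose k)"
  by (simp only: binomial_absorption binomial_absorb_comp)

lemma binomial_Suc_right_real:
  "(real k + 1) * (n choose Suc k) = (real n - real k) * (n choose k)"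
proof (cases "k \<le> n")
  case True
  with Suc_times_binomial_Suc[of k n] show ?thesis
    by (metis of_nat_Suc of_nat_diff of_nat_mult add.commute)
qed (simp add: binomial_eq_0)

lemma binomial_Suc_left_real:
  "(real n + 1 - real k) * (Suc n choose k) = (real n + 1) * (n choose k)"
proof (cases "k \<le> Suc n")
  case True
  have "(Suc n - k) * (Suc n choose k) = Suc n * (n choose k)"
    using binomial_absorb_comp[of "Suc n" k] by (simp add: algebra_simps del: binomial_Suc_Suc)
  with True show ?thesis
    by (metis of_nat_Suc of_nat_diff of_nat_mult add.commute)
qed (simp add: binomial_eq_0)

lemma central_binomial_Suc_real:
  "(real m + 1) * ((2 * Suc m) choose Suc m) = 2 * (2 * real m + 1) * ((2*m) choose m)"
proof -
  have "(real m + 1) * ((2 * Suc m) choose Suc m) = 2 * (real m + 1) * ((Suc (2*m)) choose Suc m)"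
    using binomial_Suc_left_real[of "Suc (2*m)" "Suc m"]
    by (simp add: algebra_simps del: binomial_Suc_Suc)
  moreover have "(real m + 1) * ((Suc (2*m)) choose Suc m) = (real m + 1) * ((Suc (2*m)) choose m)"
    using binomial_Suc_right_real[of m "Suc (2*m)"]
    by (simp add: algebra_simps del: binomial_Suc_Suc)
  moreover have "(real m + 1) * ((Suc (2*m)) choose m) = (2 * real m + 1) * ((2*m) choose m)"
    using binomial_Suc_left_real[of "2*m" m] by (simp add: algebra_simps del: binomial_Suc_Suc)
  ultimately show ?thesis by algebra
qed

lemma central_binomial_Suc_odd_real:
  "(real m + 2) * ((2 * Suc m + 1) choose Suc m) = 2 * (2 * real m + 3) * ((2*m + 1) choose m)"
proof -
  have "(2*m + 1) choose Suc m = (2*m + 1) choose m"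
    using binomial_symmetric[of "Suc m" "2*m + 1"] by simp
  then have "(2 * Suc m) choose Suc m = 2 * ((2*m + 1) choose m)"
    using binomial_Suc_Suc[of "2*m + 1" m] by simp
  moreover have "(real m + 2) * ((2 * Suc m + 1) choose Suc m)
      = (2 * real m + 3) * ((2 * Suc m) choose Suc m)"
    using binomial_Suc_left_real[of "2 * Suc m" "Suc m"]
    by (simp add: algebra_simps del: binomial_Suc_Suc)
  ultimately show ?thesis by simp
qed

lemma catalan_eq_diff: "catalan k = ((2*k) choose k) - ((2*k) choose Suc k)"
proof -
  have shift: "Suc k * ((2*k) choose Suc k) = k * ((2*k) choose k)"
    using Suc_times_binomial_Suc[of k "2*k"] by simp
  have "(2*k) choose k = Suc k * ((2*k) choose k) - k * ((2*k) choose k)"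
    by simp
  also have "\<dots> = Suc k * (((2*k) choose k) - ((2*k) choose Suc k))"
    by (simp only: shift diff_mult_distrib2)
  finally have "(2*k) choose k = (k + 1) * (((2*k) choose k) - ((2*k) choose Suc k))"
    by simp
  then show ?thesis
    unfolding catalan_def by (metis add_is_0 nonzero_mult_div_cancel_left one_neq_zero)
qed

text \<open>The truncated subtraction in \<open>2*n - 2*k\<close> is harmless: for \<open>k > n\<close> the first factor vanishes.\<close>

definition binom_times_central :: "nat \<Rightarrow> nat \<Rightarrow> real" where
  "binom_times_central n k = real (n choose k) * real ((2*n - 2*k) choose (n - k))"

lemma binom_times_central_eq_0: "n < k \<Longrightarrow> binom_times_central n k = 0"
  by (simp add: binom_times_central_def)

lemma binom_times_central_Suc_right:
  "2 * (real k + 1) * (2 * (real n - real k) - 1) * binom_times_central n (Suc k)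
     = (real n - real k)^2 * binom_times_central n k"
proof (cases "k < n")
  case True
  define m where "m = n - Suc k"
  have m: "n - k = Suc m" "n - Suc k = m" "2*n - 2*k = 2 * Suc m" "2*n - 2 * Suc k = 2*m"
      "real n - real k = real m + 1"
    using True by (simp_all add: m_def)
  show ?thesis
    using binomial_Suc_right_real[of k n] central_binomial_Suc_real[of m]
    unfolding binom_times_central_def m by algebra
next
  case False
  then show ?thesis by (cases "k = n") (simp_all add: binom_times_central_eq_0)
qed

lemma binom_times_central_add2:
  "4 * (real n + 1) * (real n + 2) * (2 * (real n - real k) + 1) * (2 * (real n - real k) + 3)
       * binom_times_central n k
     = (real n - real k + 1)^2 * (real n - real k + 2)^2 * binom_times_central (n+2) k"
proof (cases "k \<le> n")
  case True
  define m where "m = n - k"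
  have m: "n - k = m" "n + 2 - k = Suc (Suc m)" "2*n - 2*k = 2*m" "2*(n+2) - 2*k = 2 * Suc (Suc m)"
      "real n - real k = real m"
    using True by (simp_all add: m_def)
  have "(real m + 1) * ((n + 1) choose k) = (real n + 1) * (n choose k)"
    using binomial_Suc_left_real[of n k] m(5) by (simp add: algebra_simps)
  moreover have "(real m + 2) * ((n + 2) choose k) = (real n + 2) * ((n + 1) choose k)"
    using binomial_Suc_left_real[of "n + 1" k] m(5) by (simp add: algebra_simps)
  moreover have "(real m + 1) * ((2 * Suc m) choose Suc m)
      = 2 * (2 * real m + 1) * ((2*m) choose m)"
    by (rule central_binomial_Suc_real)
  moreover have "(real m + 2) * ((2 * Suc (Suc m)) choose Suc (Suc m))
      = 2 * (2 * real m + 3) * ((2 * Suc m) choose Suc m)"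
    using central_binomial_Suc_real[of "Suc m"] by (simp add: algebra_simps)
  ultimately show ?thesis
    unfolding binom_times_central_def m by algebra
next
  case False
  then consider "k = n + 1" | "k = n + 2" | "n + 2 < k" by linarith
  then show ?thesis by cases (simp_all add: binom_times_central_eq_0)
qed

definition a_term :: "nat \<Rightarrow> nat \<Rightarrow> real" where
  "a_term n k = (-1)^k * real ((2*k) choose k) * binom_times_central n k"

definition b_term :: "nat \<Rightarrow> nat \<Rightarrow> real" where
  "b_term n k = (-1)^k * real ((2*k) choose Suc k) * binom_times_central n k"

lemma a_term_add2:
  "4 * (real n + 1) * (real n + 2) * (2 * (real n - real k) + 1) * (2 * (real n - real k) + 3)
       * a_term n k
     = (real n - real k + 1)^2 * (real n - real k + 2)^2 * a_term (n+2) k"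
  using binom_times_central_add2[of n k] unfolding a_term_def by (simp add: mult.left_commute)

lemma b_term_add2:
  "4 * (real n + 1) * (real n + 2) * (2 * (real n - real k) + 1) * (2 * (real n - real k) + 3)
       * b_term n k
     = (real n - real k + 1)^2 * (real n - real k + 2)^2 * b_term (n+2) k"
  using binom_times_central_add2[of n k] unfolding b_term_def by (simp add: mult.left_commute)

lemma a_term_Suc_right:
  "(real k + 1)^2 * (2 * (real n - real k) - 1) * a_term n (Suc k)
     = - ((real n - real k)^2 * (2 * real k + 1) * a_term n k)"
proof -
  \<comment> \<open>The sign is named because \<open>algebra\<close> cannot treat powers with a variable exponent.\<close>
  define s where "s = (-1::real)^k"
  have "(real k + 1)^2 * (2 * (real n - real k) - 1)
        * (- s * ((2 * Suc k) choose Suc k) * binom_times_central n (Suc k))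
     = - ((real n - real k)^2 * (2 * real k + 1)
        * (s * ((2 * k) choose k) * binom_times_central n k))"
    using binom_times_central_Suc_right[of k n] central_binomial_Suc_real[of k] by algebra
  then show ?thesis by (simp add: a_term_def s_def)
qed

lemma b_term_eq_a_term: "(real k + 1) * b_term n k = real k * a_term n k"
  using binomial_Suc_right_real[of k "2*k"] unfolding a_term_def b_term_def
  by (simp add: mult.left_commute)

text \<open>As \<open>b_term n 0 = 0\<close>, consecutive \<open>b\<close>-terms are related through \<open>a_term\<close>.\<close>

lemma b_term_Suc_right:
  "(real k + 1) * (real k + 2) * (2 * (real n - real k) - 1) * b_term n (Suc k)
     = - ((real n - real k)^2 * (2 * real k + 1) * a_term n k)"
proof -
  define s where "s = (-1::real)^k"
  have "(real k + 2) * ((2 * Suc k) choose Suc (Suc k)) = (real k + 1) * ((2 * Suc k) choose Suc k)"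
    using binomial_Suc_right_real[of "Suc k" "2 * Suc k"]
    by (simp add: algebra_simps del: binomial_Suc_Suc)
  then have "(real k + 1) * (real k + 2) * (2 * (real n - real k) - 1)
        * (- s * ((2 * Suc k) choose Suc (Suc k)) * binom_times_central n (Suc k))
     = - ((real n - real k)^2 * (2 * real k + 1)
        * (s * ((2 * k) choose k) * binom_times_central n k))"
    using binom_times_central_Suc_right[of k n] central_binomial_Suc_real[of k] by algebra
  then show ?thesis by (simp add: a_term_def b_term_def s_def)
qed

lemma two_mult_diff_plus_odd_neq_0:
  assumes "odd c"
  shows "2 * (real n - real k) + of_int c \<noteq> 0"
proof
  assume "2 * (real n - real k) + of_int c = 0"
  then have "real_of_int (2 * (int n - int k) + c) = 0" by simp
  then have "2 * (int n - int k) + c = 0" by (simp only: of_int_eq_0_iff)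
  with assms show False by presburger
qed

text \<open>Certificates found by Zeilberger's algorithm: with \<open>G(k) = cert(n,k) F(n+2,k) / ((2j+1)(2j+3))\<close>,
  \<open>j = n - k\<close>, the recurrence operator applied to \<open>F(\<cdot>,k)\<close> equals \<open>G(k+1) - G(k)\<close>. Dividing by
  \<open>F(n+2,k)\<close> turns this into a rational identity in \<open>n, k\<close>; the certificate identities below are
  these with denominators cleared.\<close>

definition a_cert :: "real \<Rightarrow> real \<Rightarrow> real" where
  "a_cert n k = -10*k^2 + 30*k^3 - 22*k^4 + 4*k^5 + n*(-33*k^2 + 52*k^3 - 16*k^4)
     + n^2*(-30*k^2 + 20*k^3) - 8*n^3*k^2"

lemma a_cert_identity:
  fixes n k :: real
  shows "(k+1)^2 * (2*(n-k) - 1) * (-4*(n+1)*(n-k+1)^2*(n-k+2)^2 + (2*(n-k)+1)*(2*(n-k)+3)*(n+2)^3)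
       = - a_cert n (k+1) * (n-k+2)^2 * (2*k+1) - (k+1)^2 * (2*(n-k)-1) * a_cert n k"
  unfolding a_cert_def by algebra

definition a_telescoper :: "nat \<Rightarrow> nat \<Rightarrow> real" where
  "a_telescoper n k = a_cert n k * a_term (n+2) k
     / ((2 * (real n - real k) + 1) * (2 * (real n - real k) + 3))"

lemma a_term_telescoping:
  "-16 * (real n + 1)^2 * (real n + 2) * a_term n k + (real n + 2)^3 * a_term (n+2) k
     = a_telescoper n (Suc k) - a_telescoper n k"
proof -
  define j where "j = real n - real k"
  have odd: "2*j - 1 \<noteq> 0" "2*j + 1 \<noteq> 0" "2*j + 3 \<noteq> 0"
    using two_mult_diff_plus_odd_neq_0[of "-1" n k] two_mult_diff_plus_odd_neq_0[of 1 n k]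
      two_mult_diff_plus_odd_neq_0[of 3 n k] by (simp_all add: j_def)
  have "(real k + 1)^2 * (2*j + 3) * a_term (n+2) (Suc k)
      = - ((j + 2)^2 * (2 * real k + 1) * a_term (n+2) k)"
    using a_term_Suc_right[of k "n+2"] by (simp add: j_def algebra_simps)
  moreover have "(2*j + 1) * (2*j + 3) * a_telescoper n k = a_cert n k * a_term (n+2) k"
    using odd by (simp add: a_telescoper_def j_def)
  moreover have "(2*j - 1) * (2*j + 1) * a_telescoper n (Suc k)
      = a_cert n (real k + 1) * a_term (n+2) (Suc k)"
  proof -
    have "2 * (real n - real (Suc k)) + 1 = 2*j - 1" "2 * (real n - real (Suc k)) + 3 = 2*j + 1"
      by (simp_all add: j_def)
    with odd show ?thesis by (simp add: a_telescoper_def add.commute)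
  qed
  moreover have "4 * (real n + 1) * (real n + 2) * (2*j + 1) * (2*j + 3) * a_term n k
      = (j + 1)^2 * (j + 2)^2 * a_term (n+2) k"
    unfolding j_def by (rule a_term_add2)
  moreover have "(real k + 1)^2 * (2*j - 1)
        * (-4 * (real n + 1) * (j + 1)^2 * (j + 2)^2 + (2*j + 1) * (2*j + 3) * (real n + 2)^3)
      = - a_cert n (real k + 1) * (j + 2)^2 * (2 * real k + 1)
        - (real k + 1)^2 * (2*j - 1) * a_cert n k"
    unfolding j_def by (rule a_cert_identity)
  ultimately have "(real k + 1)^2 * (2*j - 1) * (2*j + 1) * (2*j + 3)
      * (-16 * (real n + 1)^2 * (real n + 2) * a_term n k + (real n + 2)^3 * a_term (n+2) k)
    = (real k + 1)^2 * (2*j - 1) * (2*j + 1) * (2*j + 3)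
      * (a_telescoper n (Suc k) - a_telescoper n k)"
    by algebra
  with odd show ?thesis by simp
qed

definition b_cert :: "real \<Rightarrow> real \<Rightarrow> real" where
  "b_cert n k = 17 - 52*k + 23*k^2 + 44*k^3 - 40*k^4 + 8*k^5
     + n*(68 - 126*k - 14*k^2 + 122*k^3 - 54*k^4 + 4*k^5)
     + n^2*(89 - 92*k - 73*k^2 + 92*k^3 - 16*k^4)
     + n^3*(46 - 20*k - 46*k^2 + 20*k^3) + n^4*(8 - 8*k^2)"

lemma b_cert_identity:
  fixes n k :: real
  shows "k * (k+2) * (2*(n-k) - 1)
           * (-4*(n+1)*(n+2)*(n-k+1)^2*(n-k+2)^2 + (n+1)^2*(n+3)^2*(2*(n-k)+1)*(2*(n-k)+3))
       = - b_cert n (k+1) * (n-k+2)^2 * (2*k+1) - k * (k+2) * (2*(n-k)-1) * b_cert n k"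
  unfolding b_cert_def by algebra

definition b_telescoper :: "nat \<Rightarrow> nat \<Rightarrow> real" where
  "b_telescoper n k = b_cert n k * b_term (n+2) k
     / ((2 * (real n - real k) + 1) * (2 * (real n - real k) + 3))"

lemma b_term_telescoping:
  "-16 * (real n + 1)^2 * (real n + 2)^2 * b_term n k
       + (real n + 1)^2 * (real n + 3)^2 * b_term (n+2) k
     = b_telescoper n (Suc k) - b_telescoper n k"
proof -
  define j where "j = real n - real k"
  have odd: "2*j - 1 \<noteq> 0" "2*j + 1 \<noteq> 0" "2*j + 3 \<noteq> 0"
    using two_mult_diff_plus_odd_neq_0[of "-1" n k] two_mult_diff_plus_odd_neq_0[of 1 n k]
      two_mult_diff_plus_odd_neq_0[of 3 n k] by (simp_all add: j_def)
  have "(real k + 1) * (real k + 2) * (2*j + 3) * b_term (n+2) (Suc k)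
      = - ((j + 2)^2 * (2 * real k + 1) * a_term (n+2) k)"
    using b_term_Suc_right[of k "n+2"] by (simp add: j_def algebra_simps)
  moreover have "(2*j + 1) * (2*j + 3) * b_telescoper n k = b_cert n k * b_term (n+2) k"
    using odd by (simp add: b_telescoper_def j_def)
  moreover have "(2*j - 1) * (2*j + 1) * b_telescoper n (Suc k)
      = b_cert n (real k + 1) * b_term (n+2) (Suc k)"
  proof -
    have "2 * (real n - real (Suc k)) + 1 = 2*j - 1" "2 * (real n - real (Suc k)) + 3 = 2*j + 1"
      by (simp_all add: j_def)
    with odd show ?thesis by (simp add: b_telescoper_def add.commute)
  qed
  moreover have "4 * (real n + 1) * (real n + 2) * (2*j + 1) * (2*j + 3) * b_term n k
      = (j + 1)^2 * (j + 2)^2 * b_term (n+2) k"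
    unfolding j_def by (rule b_term_add2)
  moreover have "(real k + 1) * b_term (n+2) k = real k * a_term (n+2) k"
    by (rule b_term_eq_a_term)
  moreover have "real k * (real k + 2) * (2*j - 1)
        * (-4 * (real n + 1) * (real n + 2) * (j + 1)^2 * (j + 2)^2
           + (real n + 1)^2 * (real n + 3)^2 * (2*j + 1) * (2*j + 3))
      = - b_cert n (real k + 1) * (j + 2)^2 * (2 * real k + 1)
        - real k * (real k + 2) * (2*j - 1) * b_cert n k"
    unfolding j_def by (rule b_cert_identity)
  ultimately have "(real k + 1) * (real k + 2) * (2*j - 1) * (2*j + 1) * (2*j + 3)
      * (-16 * (real n + 1)^2 * (real n + 2)^2 * b_term n k
         + (real n + 1)^2 * (real n + 3)^2 * b_term (n+2) k)
    = (real k + 1) * (real k + 2) * (2*j - 1) * (2*j + 1) * (2*j + 3)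
      * (b_telescoper n (Suc k) - b_telescoper n k)"
    by algebra
  with odd show ?thesis by simp
qed

lemma telescoping_recurrence:
  fixes f :: "nat \<Rightarrow> nat \<Rightarrow> real" and G :: "nat \<Rightarrow> real"
  assumes step: "\<And>k. c * f n k + d * f (n+2) k = G (Suc k) - G k"
    and "G 0 = 0" "G (n+3) = 0"
    and vanish: "\<And>k. n < k \<Longrightarrow> f n k = 0"
  shows "c * (\<Sum>k=0..n. f n k) + d * (\<Sum>k=0..n+2. f (n+2) k) = 0"
proof -
  have "(\<Sum>k=0..n+2. f n k) = (\<Sum>k=0..n. f n k)"
    using vanish by (simp add: numeral_2_eq_2)
  then have "c * (\<Sum>k=0..n. f n k) + d * (\<Sum>k=0..n+2. f (n+2) k)
      = (\<Sum>k=0..n+2. c * f n k + d * f (n+2) k)"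
    by (simp only: sum.distrib sum_distrib_left flip: \<open>(\<Sum>k=0..n+2. f n k) = _\<close>)
  also have "\<dots> = G (n+3) - G 0"
    unfolding step using sum_Suc_diff[of 0 "n+2" G] by (simp add: numeral_3_eq_3)
  finally show ?thesis using assms(2,3) by simp
qed

definition a_sum :: "nat \<Rightarrow> real" where
  "a_sum n = (\<Sum>k=0..n. a_term n k)"

definition b_sum :: "nat \<Rightarrow> real" where
  "b_sum n = (\<Sum>k=0..n. b_term n k)"

lemma a_sum_recurrence: "(real n + 2)^2 * a_sum (n+2) = 16 * (real n + 1)^2 * a_sum n"
proof -
  have "a_telescoper n 0 = 0" "a_telescoper n (n+3) = 0"
    by (simp_all add: a_telescoper_def a_cert_def a_term_def binom_times_central_eq_0)
  with a_term_telescoping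
  have "-16 * (real n + 1)^2 * (real n + 2) * a_sum n + (real n + 2)^3 * a_sum (n+2) = 0"
    unfolding a_sum_def
    by (rule telescoping_recurrence) (simp_all add: a_term_def binom_times_central_eq_0)
  then have "(real n + 2) * ((real n + 2)^2 * a_sum (n+2) - 16 * (real n + 1)^2 * a_sum n) = 0"
    by algebra
  then show ?thesis by (simp add: add_nonneg_eq_0_iff)
qed

lemma b_sum_recurrence: "(real n + 3)^2 * b_sum (n+2) = 16 * (real n + 2)^2 * b_sum n"
proof -
  have "b_telescoper n 0 = 0" "b_telescoper n (n+3) = 0"
    by (simp_all add: b_telescoper_def b_term_def binom_times_central_eq_0)
  with b_term_telescoping
  have "-16 * (real n + 1)^2 * (real n + 2)^2 * b_sum n
      + (real n + 1)^2 * (real n + 3)^2 * b_sum (n+2) = 0"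
    unfolding b_sum_def
    by (rule telescoping_recurrence) (simp_all add: b_term_def binom_times_central_eq_0)
  then have "(real n + 1)^2 * ((real n + 3)^2 * b_sum (n+2) - 16 * (real n + 2)^2 * b_sum n) = 0"
    by algebra
  then show ?thesis by (simp add: add_nonneg_eq_0_iff)
qed

lemma a_sum_closed_form: "a_sum (2*m) = real ((2*m) choose m)^2 \<and> a_sum (2*m + 1) = 0"
proof (induction m)
  case 0
  show ?case by (simp add: a_sum_def a_term_def binom_times_central_def)
next
  case (Suc m)
  have "(2 * real m + 2)^2 * a_sum (2 * Suc m) = 16 * (2 * real m + 1)^2 * a_sum (2*m)"
    using a_sum_recurrence[of "2*m"] by simp
  with Suc.IH central_binomial_Suc_real[of m]
  have "(2 * real m + 2)^2 * a_sum (2 * Suc m)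
      = (2 * real m + 2)^2 * real ((2 * Suc m) choose Suc m)^2"
    by algebra
  moreover have "(2 * real m + 3)^2 * a_sum (2 * Suc m + 1)
      = 16 * (2 * real m + 2)^2 * a_sum (2*m + 1)"
    using a_sum_recurrence[of "2*m + 1"] by (simp add: algebra_simps)
  ultimately show ?case using Suc.IH by simp
qed

lemma b_sum_closed_form:
  "b_sum (2*m) = 0 \<and> b_sum (2*m + 1) = - (real ((2*m + 1) choose m)^2)"
proof (induction m)
  case 0
  show ?case by (simp add: b_sum_def b_term_def binom_times_central_def numeral_2_eq_2)
next
  case (Suc m)
  have "(2 * real m + 3)^2 * b_sum (2 * Suc m) = 16 * (2 * real m + 2)^2 * b_sum (2*m)"
    using b_sum_recurrence[of "2*m"] by simp
  moreover have "(2 * real m + 4)^2 * b_sum (2 * Suc m + 1)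
      = 16 * (2 * real m + 3)^2 * b_sum (2*m + 1)"
    using b_sum_recurrence[of "2*m + 1"] by (simp add: algebra_simps)
  with Suc.IH central_binomial_Suc_odd_real[of m]
  have "(2 * real m + 4)^2 * (b_sum (2 * Suc m + 1) + real ((2 * Suc m + 1) choose Suc m)^2) = 0"
    by algebra
  ultimately show ?case using Suc.IH by (simp del: binomial_Suc_Suc add: add_eq_0_iff)
qed

lemma summand_eq_a_term_minus_b_term:
  "real_of_int ((-1)^k * int (n choose k) * int (catalan k) * int ((2*n - 2*k) choose (n - k)))
     = a_term n k - b_term n k"
proof -
  have "(2*k) choose Suc k \<le> (2*k) choose k" by (rule binomial_maximum')
  then have catalan: "real (catalan k) = real ((2*k) choose k) - real ((2*k) choose Suc k)"
    by (simp add: catalan_eq_diff of_nat_diff)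
  show ?thesis
    by (simp add: catalan a_term_def b_term_def binom_times_central_def algebra_simps)
qed

theorem mainTheorem1:
  fixes n :: nat
  shows "(\<Sum>k=0..n. (-1::int)^k * int (n choose k) * int (catalan k) * int ((2*n - 2*k) choose (n - k)))
         = int (n choose (n div 2))^2"
proof -
  have "real_of_int (\<Sum>k=0..n. (-1::int)^k * int (n choose k) * int (catalan k)
          * int ((2*n - 2*k) choose (n - k)))
      = a_sum n - b_sum n"
    by (simp only: of_int_sum summand_eq_a_term_minus_b_term sum_subtractf a_sum_def b_sum_def)
  also have "\<dots> = real (n choose (n div 2))^2"
  proof (cases "even n")
    case True
    then obtain m where "n = 2*m" by blast
    then show ?thesis using a_sum_closed_form[of m] b_sum_closed_form[of m] by simp
  next
    case False
    then obtain m where "n = 2*m + 1" using oddE by blast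
    then show ?thesis using a_sum_closed_form[of m] b_sum_closed_form[of m] by simp
  qed
  finally show ?thesis
    by (simp only: of_int_eq_iff of_int_of_nat_eq of_int_power flip: of_nat_power)
qed

end
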